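(* Consider AdaHedge for $K$-armed bandits relying on a known upper bound $M$ on the payoffs (described in the context). For all $m\in\mathbb{R}$ with $m\le M$, all oblivious sequences $y_1,y_2,\dots$ in $[m,M]^K$ and all $T\ge1$, \[ R_T(y_{1:T})\le 2(M-m)\sqrt{KT\ln K}+2(M-m). \]
   Context: Oblivious adversarial $K$-armed bandits ($K\ge2$): reward vectors $y_t\in[m,M]^K$ fixed beforehand; at round $t$ the player draws $A_t\sim p_t$ and observes only $y_{t,A_t}$; $R_T(y_{1:T})=\max_a\sum_{t=1}^Ty_{t,a}-\mathbb{E}[\sum_{t=1}^Ty_{t,A_t}]$. The player knows $M$ but not $m$. Algorithm (input $M$): $\eta_1=+\infty$, $p_1=(1/K,\dots,1/K)$. For $t\ge1$: draw $A_t\sim p_t$; observe $y_{t,A_t}$; set $\widehat y_{t,a}=\frac{y_{t,a}-M}{p_{t,a}}\mathbf{1}\{A_t=a\}+M$ for all $a$; compute $\delta_t=-\sum_a p_{t,a}\widehat y_{t,a}+\frac1{\eta_t}\ln(\sum_a p_{t,a}e^{\eta_t\widehat y_{t,a}})$ if $\eta_t<\infty$ and $\delta_t=-\sum_a p_{t,a}\widehat y_{t,a}+\max_a\widehat y_{t,a}$ if $\eta_t=\infty$; set $\eta_{t+1}=\ln K/\sum_{s=1}^t\delta_s$; set $p_{t+1,a}=\exp(\eta_{t+1}\sum_{s=1}^t\widehat y_{s,a})/\sum_{k=1}^K\exp(\eta_{t+1}\sum_{s=1}^t\widehat y_{s,k})$. No mixing with the uniform distribution is used. *)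

theory Defs
  imports Complex_Main "HOL-Library.FuncSet"
begin

text \<open>Arms are 0..K-1, rounds are 0-based (round t of the code = round t+1 of the paper).
  A reward sequence is y :: nat => nat => real, y t a.  An action history is A :: nat => nat,
  with A s the arm played at round s.  The internal state of AdaHedge before round t is the
  pair (L, D): L a = sum of the estimates yhat_{s,a} for s < t, and D = sum of delta_s for s < t.
  The learning rate is eta = ln K / D, with eta = +infinity iff D = 0 (convention ln K / 0 = infinity).\<close>

definition ah_eta :: "nat \<Rightarrow> real \<Rightarrow> real" where
  "ah_eta K D = ln (real K) / D"

text \<open>Weights p for the current state.  For eta = +infinity (D = 0) we use the limit of the
  exponential weights, i.e. uniform on the maximisers of L (this is uniform at t = 1, since L = 0).\<close>
definition ah_prob :: "nat \<Rightarrow> (nat \<Rightarrow> real) \<Rightarrow> real \<Rightarrow> nat \<Rightarrow> real" where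
  "ah_prob K L D a =
     (if D = 0 then
        (let S = {k\<in>{..<K}. L k = Max (L ` {..<K})} in if a \<in> S then 1 / real (card S) else 0)
      else exp (ah_eta K D * L a) / (\<Sum>k<K. exp (ah_eta K D * L k)))"

definition ah_delta :: "nat \<Rightarrow> real \<Rightarrow> (nat \<Rightarrow> real) \<Rightarrow> (nat \<Rightarrow> real) \<Rightarrow> real" where
  "ah_delta K D p yh =
     (if D = 0 then - (\<Sum>a<K. p a * yh a) + Max (yh ` {..<K})
      else - (\<Sum>a<K. p a * yh a)
           + (1 / ah_eta K D) * ln (\<Sum>a<K. p a * exp (ah_eta K D * yh a)))"

primrec ah_state :: "nat \<Rightarrow> real \<Rightarrow> (nat \<Rightarrow> nat \<Rightarrow> real) \<Rightarrow> (nat \<Rightarrow> nat) \<Rightarrow> nat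
                      \<Rightarrow> (nat \<Rightarrow> real) \<times> real" where
  "ah_state K M y A 0 = ((\<lambda>a. 0), 0)"
| "ah_state K M y A (Suc t) =
     (let LD = ah_state K M y A t; L = fst LD; D = snd LD;
          p = ah_prob K L D;
          yh = (\<lambda>a. if a = A t then (y t a - M) / p a + M else M)
      in ((\<lambda>a. L a + yh a), D + ah_delta K D p yh))"

definition ah_p :: "nat \<Rightarrow> real \<Rightarrow> (nat \<Rightarrow> nat \<Rightarrow> real) \<Rightarrow> (nat \<Rightarrow> nat) \<Rightarrow> nat \<Rightarrow> nat \<Rightarrow> real" where
  "ah_p K M y A t = ah_prob K (fst (ah_state K M y A t)) (snd (ah_state K M y A t))"

definition ah_expected_gain :: "nat \<Rightarrow> real \<Rightarrow> (nat \<Rightarrow> nat \<Rightarrow> real) \<Rightarrow> nat \<Rightarrow> real" where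
  "ah_expected_gain K M y T =
     (\<Sum>A \<in> PiE {..<T} (\<lambda>_. {..<K}).
        (\<Prod>t<T. ah_p K M y A t (A t)) * (\<Sum>t<T. y t (A t)))"

definition ah_regret :: "nat \<Rightarrow> real \<Rightarrow> (nat \<Rightarrow> nat \<Rightarrow> real) \<Rightarrow> nat \<Rightarrow> real" where
  "ah_regret K M y T = Max ((\<lambda>a. \<Sum>t<T. y t a) ` {..<K}) - ah_expected_gain K M y T"

end

theory Submission
  imports Defs "HOL-Analysis.Convex"
begin

text \<open>Fix the actions \<open>A\<close> and write \<open>L\<^sub>t\<close> for the cumulative estimates and \<open>D\<^sub>t\<close> for the
  cumulative mixability gap, so that \<open>\<eta>\<^sub>t = ln K / D\<^sub>t\<close>. The mix-loss potential
  \<open>\<Phi>(L, D) = ln (\<Sum>a. exp (\<eta> L a) / K) / \<eta>\<close> (equal to \<open>max L\<close> when \<open>D = 0\<close>) rises in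
  round \<open>t\<close> by at most the Hedge gain \<open>\<Sum>a. p\<^sub>t a * yhat\<^sub>t a\<close> plus \<open>\<delta>\<^sub>t\<close>, decreases in \<open>D\<close>,
  and satisfies \<open>\<Phi>(L, D) \<ge> max L - D\<close>; hence \<open>max L\<^sub>T\<close> minus the total Hedge gain is at most
  \<open>2 D\<^sub>T\<close>. Since the estimates never exceed \<open>M\<close>, \<open>\<delta>\<^sub>t \<le> M - m\<close> and
  \<open>\<delta>\<^sub>t \<le> \<eta>\<^sub>t V\<^sub>t / 2\<close> with \<open>V\<^sub>t = \<Sum>a. p\<^sub>t a * (yhat\<^sub>t a - M)\<^sup>2\<close>, so
  \<open>D\<^sub>T\<^sup>2 \<le> ln K * \<Sum>t. V\<^sub>t + (M - m) D\<^sub>T\<close> and \<open>D\<^sub>T \<le> M - m + sqrt (ln K * \<Sum>t. V\<^sub>t)\<close>.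
  Taking expectations over the actions, the Hedge gain becomes the player's reward, the estimates
  dominate the rewards, \<open>E V\<^sub>t \<le> K (M - m)\<^sup>2\<close>, and Jensen's inequality for the square root
  concludes.\<close>

section \<open>Elementary inequalities\<close>

lemma exp_le_quadratic_nonpos:
  fixes x :: real
  assumes "x \<le> 0"
  shows "exp x \<le> 1 + x + x\<^sup>2 / 2"
proof -
  let ?f = "\<lambda>x::real. 1 + x + x\<^sup>2 / 2 - exp x"
  have "?f 0 \<le> ?f x"
  proof (rule DERIV_nonpos_imp_nonincreasing[OF assms])
    fix z :: real
    assume "z \<le> 0"
    then show "\<exists>d. DERIV ?f z :> d \<and> d \<le> 0"
      by (intro exI[of _ "1 + z - exp z"]) (auto intro!: derivative_eq_intros)
  qed
  then show ?thesis
    by simp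
qed

lemma exp_weighted_mean_le:
  fixes w x :: "'a \<Rightarrow> real"
  assumes "finite S" "\<And>i. i \<in> S \<Longrightarrow> 0 \<le> w i" "sum w S = 1"
  shows "exp (\<Sum>i\<in>S. w i * x i) \<le> (\<Sum>i\<in>S. w i * exp (x i))"
proof -
  have "S \<noteq> {}"
    using assms(3) by auto
  then show ?thesis
    using convex_on_sum[OF assms(1) _ exp_convex assms(3)] assms(2) by simp
qed

lemma weighted_mean_sqrt_le:
  fixes w f :: "'a \<Rightarrow> real"
  assumes "finite S" "\<And>i. i \<in> S \<Longrightarrow> 0 \<le> w i" "sum w S = 1" "\<And>i. i \<in> S \<Longrightarrow> 0 \<le> f i"
  shows "(\<Sum>i\<in>S. w i * sqrt (f i)) \<le> sqrt (\<Sum>i\<in>S. w i * f i)"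
proof -
  have "S \<noteq> {}"
    using assms(3) by auto
  then have "(\<Sum>i\<in>S. w i * sqrt (f i))\<^sup>2 \<le> (\<Sum>i\<in>S. w i * (sqrt (f i))\<^sup>2)"
    using convex_on_sum[OF assms(1) _ convex_power2 assms(3)] assms(2) by simp
  also have "\<dots> = (\<Sum>i\<in>S. w i * f i)"
    using assms(4) by simp
  finally show ?thesis
    by (rule real_le_rsqrt)
qed

lemma square_le_affine_imp_le_add_sqrt:
  fixes x a b :: real
  assumes "x\<^sup>2 \<le> a + b * x" "0 \<le> a" "0 \<le> b"
  shows "x \<le> b + sqrt a"
proof (rule ccontr)
  assume "\<not> x \<le> b + sqrt a"
  then have "sqrt a < x - b" "0 < x - b"
    using real_sqrt_ge_zero[OF assms(2)] by linarith+
  then have "a < (x - b) * x"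
    using assms by (smt (verit) mult_strict_mono real_sqrt_ge_zero real_sqrt_mult_self)
  then show False
    using assms(1) by (simp add: power2_eq_square algebra_simps)
qed

section \<open>One round of AdaHedge\<close>

locale arms =
  fixes K :: nat
  assumes two_le_K: "2 \<le> K"
begin

lemma K_pos: "0 < real K"
  using two_le_K by simp

lemma ln_K_pos: "0 < ln (real K)"
  using two_le_K by simp

lemma arms_nonempty: "{..<K} \<noteq> {}"
  using two_le_K by (simp add: lessThan_empty_iff)

lemma Max_attained: "\<exists>a<K. f a = Max (f ` {..<K})"
proof -
  have "Max (f ` {..<K}) \<in> f ` {..<K}"
    using arms_nonempty by (intro Max_in) auto
  then show ?thesis
    by auto
qed

lemma sum_exp_pos: "0 < (\<Sum>a<K. exp (f a :: real))"
  using arms_nonempty by (intro sum_pos) auto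

lemma eta_pos: "0 < D \<Longrightarrow> 0 < ah_eta K D"
  using ln_K_pos by (simp add: ah_eta_def)

definition is_distr :: "(nat \<Rightarrow> real) \<Rightarrow> bool" where
  "is_distr p \<longleftrightarrow> (\<forall>a<K. 0 \<le> p a) \<and> (\<Sum>a<K. p a) = 1"

lemma ah_prob_nonneg: "0 \<le> ah_prob K L D a"
  unfolding ah_prob_def Let_def by (auto intro!: divide_nonneg_nonneg sum_nonneg)

lemma ah_prob_sum: "(\<Sum>a<K. ah_prob K L D a) = 1"
proof (cases "D = 0")
  case True
  define S where "S = {k\<in>{..<K}. L k = Max (L ` {..<K})}"
  have "S \<noteq> {}" "finite S" "S \<subseteq> {..<K}"
    using Max_attained[of L] by (auto simp: S_def)
  moreover have "ah_prob K L D a = (if a \<in> S then 1 / real (card S) else 0)" for a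
    using True unfolding ah_prob_def S_def Let_def by simp
  ultimately show ?thesis
    by (simp add: sum.If_cases Int_absorb1)
next
  case False
  then show ?thesis
    using sum_exp_pos[of "\<lambda>a. ah_eta K D * L a"]
    by (simp add: ah_prob_def flip: sum_divide_distrib)
qed

lemma is_distr_ah_prob: "is_distr (ah_prob K L D)"
  using ah_prob_nonneg ah_prob_sum by (simp add: is_distr_def)

lemma mean_le_Max:
  assumes "is_distr p"
  shows "(\<Sum>a<K. p a * f a) \<le> Max (f ` {..<K})"
proof -
  have "(\<Sum>a<K. p a * f a) \<le> (\<Sum>a<K. p a * Max (f ` {..<K}))"
    using assms by (intro sum_mono mult_left_mono) (auto simp: is_distr_def)
  also have "\<dots> = Max (f ` {..<K})"
    using assms by (simp add: is_distr_def flip: sum_distrib_right)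
  finally show ?thesis .
qed

lemma exp_mean_le:
  assumes "is_distr p"
  shows "exp (\<Sum>a<K. p a * f a) \<le> (\<Sum>a<K. p a * exp (f a))"
  using assms by (intro exp_weighted_mean_le) (auto simp: is_distr_def)

lemma mean_exp_pos:
  assumes "is_distr p"
  shows "0 < (\<Sum>a<K. p a * exp (f a))"
  by (rule less_le_trans[OF exp_gt_zero exp_mean_le[OF assms]])

lemma ah_delta_nonneg:
  assumes "0 \<le> D" "is_distr p"
  shows "0 \<le> ah_delta K D p g"
proof (cases "D = 0")
  case True
  then show ?thesis
    using mean_le_Max[OF assms(2), of g] by (simp add: ah_delta_def)
next
  case False
  define e where "e = ah_eta K D"
  have e: "0 < e"
    using False assms(1) eta_pos by (simp add: e_def)
  have "exp (e * (\<Sum>a<K. p a * g a)) \<le> (\<Sum>a<K. p a * exp (e * g a))"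
    using exp_mean_le[OF assms(2), of "\<lambda>a. e * g a"] by (simp add: sum_distrib_left algebra_simps)
  then have "e * (\<Sum>a<K. p a * g a) \<le> ln (\<Sum>a<K. p a * exp (e * g a))"
    using mean_exp_pos[OF assms(2)] by (simp add: ln_ge_iff)
  then show ?thesis
    using False assms(1) e by (simp add: ah_delta_def e_def field_simps)
qed

lemma ah_delta_le:
  assumes "0 \<le> D" "is_distr p" "\<And>a. a < K \<Longrightarrow> g a \<le> M"
  shows "ah_delta K D p g \<le> M - (\<Sum>a<K. p a * g a)"
proof (cases "D = 0")
  case True
  have "Max (g ` {..<K}) \<le> M"
    using assms(3) arms_nonempty by simp
  then show ?thesis
    using True by (simp add: ah_delta_def)
next
  case False
  define e where "e = ah_eta K D"
  have e: "0 < e"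
    using False assms(1) eta_pos by (simp add: e_def)
  have "(\<Sum>a<K. p a * exp (e * g a)) \<le> (\<Sum>a<K. p a * exp (e * M))"
    using assms e by (intro sum_mono mult_left_mono) (auto simp: is_distr_def)
  also have "\<dots> = exp (e * M)"
    using assms(2) by (simp add: is_distr_def flip: sum_distrib_right)
  finally have "ln (\<Sum>a<K. p a * exp (e * g a)) \<le> e * M"
    using mean_exp_pos[OF assms(2)] by (metis ln_exp ln_le_cancel_iff exp_gt_zero)
  then show ?thesis
    using False assms(1) e by (simp add: ah_delta_def e_def field_simps)
qed

lemma ln_mean_exp_le_quadratic:
  assumes "is_distr p" "0 \<le> e" "\<And>a. a < K \<Longrightarrow> h a \<le> 0"
  shows "ln (\<Sum>a<K. p a * exp (e * h a)) \<le> e * (\<Sum>a<K. p a * h a) + e\<^sup>2 / 2 * (\<Sum>a<K. p a * (h a)\<^sup>2)"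
proof -
  have "ln (\<Sum>a<K. p a * exp (e * h a)) \<le> (\<Sum>a<K. p a * exp (e * h a)) - 1"
    using mean_exp_pos[OF assms(1)] by (rule ln_le_minus_one)
  also have "(\<Sum>a<K. p a * exp (e * h a)) \<le> (\<Sum>a<K. p a * (1 + e * h a + (e * h a)\<^sup>2 / 2))"
    using assms by (intro sum_mono mult_left_mono exp_le_quadratic_nonpos)
      (auto simp: is_distr_def mult_nonneg_nonpos)
  also have "\<dots> = 1 + e * (\<Sum>a<K. p a * h a) + e\<^sup>2 / 2 * (\<Sum>a<K. p a * (h a)\<^sup>2)"
    using assms(1) by (simp add: is_distr_def sum.distrib sum_distrib_left algebra_simps power2_eq_square)
  finally show ?thesis
    by simp
qed

lemma ah_delta_le_variance:
  assumes "0 < D" "is_distr p" "\<And>a. a < K \<Longrightarrow> g a \<le> M"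
  shows "ah_delta K D p g \<le> ah_eta K D / 2 * (\<Sum>a<K. p a * (g a - M)\<^sup>2)"
proof -
  define e where "e = ah_eta K D"
  define V where "V = (\<Sum>a<K. p a * (g a - M)\<^sup>2)"
  have e: "0 < e"
    using assms(1) eta_pos by (simp add: e_def)
  have "(\<Sum>a<K. p a * (g a - M)) = (\<Sum>a<K. p a * g a) - (\<Sum>a<K. p a) * M"
    by (simp add: right_diff_distrib sum_subtractf sum_distrib_right)
  then have mean_shift: "(\<Sum>a<K. p a * (g a - M)) = (\<Sum>a<K. p a * g a) - M"
    using assms(2) by (simp add: is_distr_def)
  have "(\<Sum>a<K. p a * exp (e * g a)) = exp (e * M) * (\<Sum>a<K. p a * exp (e * (g a - M)))"
    by (simp add: sum_distrib_left algebra_simps flip: exp_add)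
  then have "ln (\<Sum>a<K. p a * exp (e * g a)) = e * M + ln (\<Sum>a<K. p a * exp (e * (g a - M)))"
    using mean_exp_pos[OF assms(2), of "\<lambda>a. e * (g a - M)"] by (simp add: ln_mult)
  also have "\<dots> \<le> e * M + e * (\<Sum>a<K. p a * (g a - M)) + e\<^sup>2 / 2 * V"
    using ln_mean_exp_le_quadratic[OF assms(2), of e "\<lambda>a. g a - M"] e assms(3) by (simp add: V_def)
  also have "\<dots> = e * ((\<Sum>a<K. p a * g a) + e / 2 * V)"
    unfolding mean_shift by (simp add: algebra_simps power2_eq_square)
  finally have "ln (\<Sum>a<K. p a * exp (e * g a)) / e \<le> (\<Sum>a<K. p a * g a) + e / 2 * V"
    using e by (simp add: pos_divide_le_eq mult.commute)
  moreover have "ah_delta K D p g = ln (\<Sum>a<K. p a * exp (e * g a)) / e - (\<Sum>a<K. p a * g a)"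
    using assms(1) by (simp add: ah_delta_def e_def)
  ultimately show ?thesis
    unfolding e_def V_def by linarith
qed

section \<open>The mix-loss potential\<close>

lemma ln_mean_exp_div_le_Max:
  assumes "0 < e"
  shows "ln ((\<Sum>a<K. exp (e * L a)) / K) / e \<le> Max (L ` {..<K})"
proof -
  have "(\<Sum>a<K. exp (e * L a)) / K \<le> (\<Sum>a<K. exp (e * Max (L ` {..<K}))) / K"
    using K_pos assms by (intro divide_right_mono sum_mono) auto
  also have "\<dots> = exp (e * Max (L ` {..<K}))"
    using K_pos by simp
  finally have "ln ((\<Sum>a<K. exp (e * L a)) / K) \<le> e * Max (L ` {..<K})"
    using sum_exp_pos K_pos by (metis divide_pos_pos ln_exp ln_le_cancel_iff exp_gt_zero)
  then show ?thesis
    using assms by (simp add: divide_le_eq mult.commute)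
qed

text \<open>Convexity of \<open>exp\<close> between \<open>ln c\<close> and \<open>e * L a\<close> with weight \<open>r = e' / e\<close>, where \<open>c\<close> is
  the mean at rate \<open>e\<close>, bounds the mean at rate \<open>e'\<close> by \<open>c powr r\<close>.\<close>
lemma ln_mean_exp_div_mono:
  assumes "0 < e'" "e' \<le> e"
  shows "ln ((\<Sum>a<K. exp (e' * L a)) / K) / e' \<le> ln ((\<Sum>a<K. exp (e * L a)) / K) / e"
proof -
  define r where "r = e' / e"
  have r: "0 < r" "r \<le> 1"
    using assms by (auto simp: r_def)
  define c where "c = (\<Sum>a<K. exp (e * L a)) / K"
  define c' where "c' = (\<Sum>a<K. exp (e' * L a)) / K"
  have c: "0 < c" "0 < c'"
    using sum_exp_pos K_pos by (simp_all add: c_def c'_def)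
  have sums: "(\<Sum>a<K. exp (e * L a)) = K * c" "(\<Sum>a<K. exp (e' * L a)) = K * c'"
    using K_pos by (simp_all add: c_def c'_def)
  have "exp ((1 - r) * ln c) * (\<Sum>a<K. exp (e' * L a))
      = (\<Sum>a<K. exp ((1 - r) * ln c + r * (e * L a)))"
    using assms by (simp add: r_def sum_distrib_left exp_add)
  also have "\<dots> \<le> (\<Sum>a<K. (1 - r) * exp (ln c) + r * exp (e * L a))"
    using r by (intro sum_mono convex_onD[OF exp_convex, simplified]) auto
  also have "\<dots> = (1 - r) * c * K + r * (\<Sum>a<K. exp (e * L a))"
    using c by (simp add: sum.distrib sum_distrib_left)
  also have "\<dots> = K * c"
    by (simp add: sums(1) algebra_simps)
  finally have "exp ((1 - r) * ln c) * c' \<le> c"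
    using K_pos by (simp add: sums(2) mult.left_commute)
  then have "ln (exp ((1 - r) * ln c) * c') \<le> ln c"
    using c by simp
  then have "(1 - r) * ln c + ln c' \<le> ln c"
    using c by (simp add: ln_mult)
  then have "ln c' / e' \<le> r * ln c / e'"
    using assms by (simp add: divide_right_mono algebra_simps)
  also have "\<dots> = ln c / e"
    using assms by (simp add: r_def)
  finally show ?thesis
    by (simp add: c_def c'_def)
qed

definition potential :: "(nat \<Rightarrow> real) \<Rightarrow> real \<Rightarrow> real" where
  "potential L D =
     (if D = 0 then Max (L ` {..<K}) else ln ((\<Sum>a<K. exp (ah_eta K D * L a)) / K) / ah_eta K D)"

lemma potential_zero: "potential (\<lambda>_. 0) 0 = 0"
  using arms_nonempty by (simp add: potential_def)

lemma potential_step: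
  assumes "0 \<le> D"
  shows "potential (\<lambda>a. L a + g a) D - potential L D
    \<le> (\<Sum>a<K. ah_prob K L D a * g a) + ah_delta K D (ah_prob K L D) g"
proof (cases "D = 0")
  case True
  have "Max ((\<lambda>a. L a + g a) ` {..<K}) \<le> Max (L ` {..<K}) + Max (g ` {..<K})"
    using arms_nonempty by (simp add: add_mono)
  then show ?thesis
    using True by (simp add: potential_def ah_delta_def)
next
  case False
  define e where "e = ah_eta K D"
  define Z where "Z = (\<Sum>a<K. exp (e * L a))"
  define Z' where "Z' = (\<Sum>a<K. exp (e * (L a + g a)))"
  have Z: "0 < Z" "0 < Z'"
    unfolding Z_def Z'_def by (rule sum_exp_pos)+
  have "(\<Sum>a<K. ah_prob K L D a * exp (e * g a)) = Z' / Z"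
    using False by (simp add: ah_prob_def e_def Z_def Z'_def distrib_left exp_add sum_divide_distrib)
  moreover have "potential (\<lambda>a. L a + g a) D - potential L D = ln (Z' / Z) / e"
    using False Z K_pos by (simp add: potential_def e_def Z_def Z'_def ln_div diff_divide_distrib)
  ultimately show ?thesis
    using False by (simp add: ah_delta_def e_def)
qed

lemma Max_le_potential:
  assumes "0 \<le> D"
  shows "Max (L ` {..<K}) \<le> potential L D + D"
proof (cases "D = 0")
  case True
  then show ?thesis
    by (simp add: potential_def)
next
  case False
  define e where "e = ah_eta K D"
  have e: "0 < e" and D_eq: "ln K / e = D"
    using False assms eta_pos ln_K_pos by (auto simp: e_def ah_eta_def)
  obtain a0 where a0: "a0 < K" "L a0 = Max (L ` {..<K})"
    using Max_attained by blast
  have "exp (e * L a0) / K \<le> (\<Sum>a<K. exp (e * L a)) / K"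
    using a0 K_pos by (intro divide_right_mono member_le_sum) auto
  then have "e * L a0 - ln K \<le> ln ((\<Sum>a<K. exp (e * L a)) / K)"
    using K_pos sum_exp_pos by (simp add: ln_div flip: ln_le_cancel_iff)
  then have "(e * L a0 - ln K) / e \<le> ln ((\<Sum>a<K. exp (e * L a)) / K) / e"
    using e by (simp add: divide_right_mono)
  then show ?thesis
    using a0 False D_eq e by (simp add: potential_def e_def diff_divide_distrib)
qed

lemma potential_antimono:
  assumes "0 \<le> D" "D \<le> D'"
  shows "potential L D' \<le> potential L D"
proof -
  consider "D' = 0" | "D = 0" "0 < D'" | "0 < D" "D \<le> D'"
    using assms by linarith
  then show ?thesis
  proof cases
    case 1
    then show ?thesis
      using assms by simp
  next
    case 2
    then show ?thesis
      using ln_mean_exp_div_le_Max eta_pos by (simp add: potential_def)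
  next
    case 3
    have "ah_eta K D' \<le> ah_eta K D"
      using 3 ln_K_pos by (simp add: ah_eta_def frac_le)
    then show ?thesis
      using 3 eta_pos ln_mean_exp_div_mono by (simp add: potential_def)
  qed
qed

end

section \<open>Expectation over action histories\<close>

locale sequential_policy =
  fixes K :: nat and P :: "(nat \<Rightarrow> nat) \<Rightarrow> nat \<Rightarrow> nat \<Rightarrow> real"
  assumes P_nonneg: "0 \<le> P A t a"
    and P_sum: "(\<Sum>a<K. P A t a) = 1"
    and P_causal: "(\<And>s. s < t \<Longrightarrow> A s = B s) \<Longrightarrow> P A t = P B t"
begin

abbreviation histories :: "nat \<Rightarrow> (nat \<Rightarrow> nat) set" where
  "histories T \<equiv> PiE {..<T} (\<lambda>_. {..<K})"

definition history_prob :: "nat \<Rightarrow> (nat \<Rightarrow> nat) \<Rightarrow> real" where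
  "history_prob T A = (\<Prod>t<T. P A t (A t))"

definition expect :: "nat \<Rightarrow> ((nat \<Rightarrow> nat) \<Rightarrow> real) \<Rightarrow> real" where
  "expect T f = (\<Sum>A\<in>histories T. history_prob T A * f A)"

lemma history_prob_nonneg: "0 \<le> history_prob T A"
  unfolding history_prob_def by (intro prod_nonneg P_nonneg)

lemma history_prob_Suc: "history_prob (Suc T) A = history_prob T A * P A T (A T)"
  by (simp add: history_prob_def)

lemma P_fun_upd: "T \<le> t \<Longrightarrow> P (A(t := a)) T = P A T"
  by (intro P_causal) auto

lemma history_prob_fun_upd: "history_prob T (A(T := a)) = history_prob T A"
  unfolding history_prob_def by (intro prod.cong) (auto simp: P_fun_upd)

lemma P_pos_if_history_prob_pos:
  assumes "history_prob T A \<noteq> 0" "t < T"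
  shows "P A t (A t) \<noteq> 0"
  using assms by (auto simp: history_prob_def prod_zero_iff)

lemma expect_Suc: "expect (Suc T) f = expect T (\<lambda>A. \<Sum>a<K. P A T a * f (A(T := a)))"
proof -
  have "expect (Suc T) f = (\<Sum>(a, A)\<in>{..<K} \<times> histories T. history_prob (Suc T) (A(T := a)) * f (A(T := a)))"
    unfolding expect_def lessThan_Suc PiE_insert_eq
    by (subst sum.reindex[OF inj_combinator]) (simp_all add: case_prod_beta)
  also have "\<dots> = (\<Sum>A\<in>histories T. \<Sum>a<K. history_prob (Suc T) (A(T := a)) * f (A(T := a)))"
    unfolding sum.cartesian_product[symmetric] by (rule sum.swap)
  also have "\<dots> = (\<Sum>A\<in>histories T. history_prob T A * (\<Sum>a<K. P A T a * f (A(T := a))))"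
    by (simp add: history_prob_Suc history_prob_fun_upd P_fun_upd sum_distrib_left algebra_simps)
  finally show ?thesis
    by (simp add: expect_def)
qed

lemma expect_add: "expect T (\<lambda>A. f A + g A) = expect T f + expect T g"
  by (simp add: expect_def distrib_left sum.distrib)

lemma expect_diff: "expect T (\<lambda>A. f A - g A) = expect T f - expect T g"
  by (simp add: expect_def right_diff_distrib sum_subtractf)

lemma expect_cmult: "expect T (\<lambda>A. c * f A) = c * expect T f"
  by (simp add: expect_def sum_distrib_left algebra_simps)

lemma expect_sum: "expect T (\<lambda>A. \<Sum>i\<in>I. f i A) = (\<Sum>i\<in>I. expect T (f i))"
  unfolding expect_def by (simp add: sum_distrib_left) (rule sum.swap)

lemma sum_history_prob: "(\<Sum>A\<in>histories T. history_prob T A) = 1"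
proof (induction T)
  case 0
  then show ?case
    by (simp add: history_prob_def)
next
  case (Suc T)
  have "expect (Suc T) (\<lambda>_. 1) = expect T (\<lambda>_. 1)"
    by (simp add: expect_Suc P_sum)
  with Suc show ?case
    by (simp add: expect_def)
qed

lemma expect_const: "expect T (\<lambda>_. c) = c"
  by (simp add: expect_def sum_history_prob flip: sum_distrib_right)

lemma expect_mono:
  assumes "\<And>A. A \<in> histories T \<Longrightarrow> history_prob T A \<noteq> 0 \<Longrightarrow> f A \<le> g A"
  shows "expect T f \<le> expect T g"
  unfolding expect_def
proof (rule sum_mono)
  fix A
  assume "A \<in> histories T"
  then show "history_prob T A * f A \<le> history_prob T A * g A"
    using assms history_prob_nonneg by (cases "history_prob T A = 0") (auto intro: mult_left_mono)
qed

lemma expect_cong: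
  assumes "\<And>A. A \<in> histories T \<Longrightarrow> history_prob T A \<noteq> 0 \<Longrightarrow> f A = g A"
  shows "expect T f = expect T g"
  using expect_mono[of T f g] expect_mono[of T g f] assms by fastforce

lemma expect_prefix:
  assumes "\<And>A B. (\<And>s. s < t \<Longrightarrow> A s = B s) \<Longrightarrow> f A = f B"
  shows "expect (t + n) f = expect t f"
proof (induction n)
  case 0
  then show ?case
    by simp
next
  case (Suc n)
  have "f (A(t + n := a)) = f A" for A a
    by (rule assms) simp
  then have "expect (t + Suc n) f = expect (t + n) f"
    by (simp add: expect_Suc P_sum flip: sum_distrib_right)
  with Suc show ?case
    by simp
qed

lemma expect_eq_expect_round:
  assumes "\<And>A B. (\<And>s. s \<le> t \<Longrightarrow> A s = B s) \<Longrightarrow> f A = f B" "t < T"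
  shows "expect T f = expect t (\<lambda>A. \<Sum>a<K. P A t a * f (A(t := a)))"
proof -
  have "expect (Suc t + (T - Suc t)) f = expect (Suc t) f"
    by (rule expect_prefix, rule assms(1)) (simp add: less_Suc_eq_le)
  with assms(2) show ?thesis
    by (simp add: expect_Suc)
qed

lemma expect_sqrt_le:
  assumes "\<And>A. 0 \<le> f A"
  shows "expect T (\<lambda>A. sqrt (f A)) \<le> sqrt (expect T f)"
  unfolding expect_def using assms history_prob_nonneg sum_history_prob
  by (intro weighted_mean_sqrt_le) (auto simp: finite_PiE)

end

section \<open>Pathwise analysis\<close>

locale bandit = arms K for K +
  fixes M m :: real and y :: "nat \<Rightarrow> nat \<Rightarrow> real"
  assumes m_le_M: "m \<le> M"
    and y_bounds: "a < K \<Longrightarrow> m \<le> y t a \<and> y t a \<le> M"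
begin

definition cum_est :: "(nat \<Rightarrow> nat) \<Rightarrow> nat \<Rightarrow> nat \<Rightarrow> real" where
  "cum_est A t = fst (ah_state K M y A t)"

definition gap_sum :: "(nat \<Rightarrow> nat) \<Rightarrow> nat \<Rightarrow> real" where
  "gap_sum A t = snd (ah_state K M y A t)"

definition est :: "(nat \<Rightarrow> nat) \<Rightarrow> nat \<Rightarrow> nat \<Rightarrow> real" where
  "est A t a = (if a = A t then (y t a - M) / ah_p K M y A t a + M else M)"

definition gap :: "(nat \<Rightarrow> nat) \<Rightarrow> nat \<Rightarrow> real" where
  "gap A t = ah_delta K (gap_sum A t) (ah_p K M y A t) (est A t)"

definition hedge_gain :: "(nat \<Rightarrow> nat) \<Rightarrow> nat \<Rightarrow> real" where
  "hedge_gain A t = (\<Sum>a<K. ah_p K M y A t a * est A t a)"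

definition est_var :: "(nat \<Rightarrow> nat) \<Rightarrow> nat \<Rightarrow> real" where
  "est_var A t = (\<Sum>a<K. ah_p K M y A t a * (est A t a - M)\<^sup>2)"

lemma ah_p_eq: "ah_p K M y A t = ah_prob K (cum_est A t) (gap_sum A t)"
  by (simp add: ah_p_def cum_est_def gap_sum_def)

lemma cum_est_Suc: "cum_est A (Suc t) = (\<lambda>a. cum_est A t a + est A t a)"
  unfolding est_def[abs_def] ah_p_def by (simp add: cum_est_def Let_def)

lemma gap_sum_Suc: "gap_sum A (Suc t) = gap_sum A t + gap A t"
  unfolding gap_def est_def[abs_def] ah_p_def by (simp add: gap_sum_def Let_def)

lemma cum_est_eq_sum: "cum_est A T a = (\<Sum>t<T. est A t a)"
  by (induction T) (simp_all add: cum_est_Suc, simp add: cum_est_def)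

lemma gap_sum_eq_sum: "gap_sum A T = (\<Sum>t<T. gap A t)"
  by (induction T) (simp_all add: gap_sum_Suc, simp add: gap_sum_def)

lemma ah_state_causal: "(\<And>s. s < t \<Longrightarrow> A s = B s) \<Longrightarrow> ah_state K M y A t = ah_state K M y B t"
  by (induction t) (auto simp: Let_def)

lemma is_distr_ah_p: "is_distr (ah_p K M y A t)"
  by (simp add: ah_p_eq is_distr_ah_prob)

lemma ah_p_nonneg: "0 \<le> ah_p K M y A t a"
  by (simp add: ah_p_eq ah_prob_nonneg)

lemma est_le: "a < K \<Longrightarrow> est A t a \<le> M"
  using y_bounds[of a t] ah_p_nonneg[of A t a] by (auto simp: est_def divide_nonpos_nonneg)

lemma hedge_gain_eq:
  "hedge_gain A t = (if A t < K \<and> ah_p K M y A t (A t) \<noteq> 0 then y t (A t) else M)"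
proof -
  let ?p = "ah_p K M y A t"
  have "hedge_gain A t = (\<Sum>a<K. M * ?p a + (if a = A t then ?p a * ((y t a - M) / ?p a) else 0))"
    unfolding hedge_gain_def est_def by (intro sum.cong) (auto simp: algebra_simps)
  also have "\<dots> = M * (\<Sum>a<K. ?p a) + (if A t < K then ?p (A t) * ((y t (A t) - M) / ?p (A t)) else 0)"
    by (simp add: sum.distrib sum_distrib_left)
  finally show ?thesis
    using is_distr_ah_p[of A t] by (auto simp: is_distr_def)
qed

lemma m_le_hedge_gain: "m \<le> hedge_gain A t"
  using hedge_gain_eq[of A t] y_bounds[of "A t" t] m_le_M by auto

lemma gap_sum_nonneg: "0 \<le> gap_sum A t"
proof (induction t)
  case 0
  then show ?case
    by (simp add: gap_sum_def)
next
  case (Suc t)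
  then show ?case
    using ah_delta_nonneg[OF Suc is_distr_ah_p] by (simp add: gap_sum_Suc gap_def)
qed

lemma gap_nonneg: "0 \<le> gap A t"
  unfolding gap_def by (rule ah_delta_nonneg[OF gap_sum_nonneg is_distr_ah_p])

lemma gap_le: "gap A t \<le> M - m"
proof -
  have "gap A t \<le> M - hedge_gain A t"
    unfolding gap_def hedge_gain_def by (rule ah_delta_le[OF gap_sum_nonneg is_distr_ah_p est_le])
  with m_le_hedge_gain[of A t] show ?thesis
    by linarith
qed

lemma gap_sum_mult_gap_le: "2 * (gap_sum A t * gap A t) \<le> ln K * est_var A t"
proof (cases "gap_sum A t = 0")
  case True
  then show ?thesis
    using ln_K_pos by (simp add: est_var_def sum_nonneg ah_p_nonneg)
next
  case False
  then have D: "0 < gap_sum A t"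
    using gap_sum_nonneg[of A t] by simp
  have "gap A t \<le> ah_eta K (gap_sum A t) / 2 * est_var A t"
    unfolding gap_def est_var_def by (rule ah_delta_le_variance[OF D is_distr_ah_p est_le])
  then have "2 * (gap_sum A t * gap A t) \<le> 2 * (gap_sum A t * (ah_eta K (gap_sum A t) / 2 * est_var A t))"
    using D by simp
  also have "\<dots> = ln K * est_var A t"
    using D by (simp add: ah_eta_def)
  finally show ?thesis .
qed

lemma potential_le_sum_hedge_gain_gap:
  "potential (cum_est A T) (gap_sum A T) \<le> (\<Sum>t<T. hedge_gain A t + gap A t)"
proof (induction T)
  case 0
  then show ?case
    using potential_zero by (simp add: cum_est_def gap_sum_def)
next
  case (Suc t)
  have "potential (cum_est A (Suc t)) (gap_sum A t) - potential (cum_est A t) (gap_sum A t)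
      \<le> hedge_gain A t + gap A t"
    unfolding cum_est_Suc hedge_gain_def gap_def ah_p_eq by (rule potential_step[OF gap_sum_nonneg])
  moreover have "potential (cum_est A (Suc t)) (gap_sum A (Suc t)) \<le> potential (cum_est A (Suc t)) (gap_sum A t)"
    by (rule potential_antimono[OF gap_sum_nonneg]) (simp add: gap_sum_Suc gap_nonneg)
  ultimately show ?case
    using Suc by simp
qed

lemma Max_cum_est_minus_hedge_gain_le:
  "Max (cum_est A T ` {..<K}) - (\<Sum>t<T. hedge_gain A t) \<le> 2 * gap_sum A T"
  using Max_le_potential[OF gap_sum_nonneg, of "cum_est A T" A T] potential_le_sum_hedge_gain_gap[of A T]
  by (simp add: sum.distrib gap_sum_eq_sum)

lemma gap_sum_square_le: "(gap_sum A T)\<^sup>2 \<le> ln K * (\<Sum>t<T. est_var A t) + (M - m) * gap_sum A T"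
proof (induction T)
  case 0
  then show ?case
    by (simp add: gap_sum_def)
next
  case (Suc t)
  have "(gap_sum A (Suc t))\<^sup>2 = (gap_sum A t)\<^sup>2 + 2 * (gap_sum A t * gap A t) + gap A t * gap A t"
    by (simp add: gap_sum_Suc power2_eq_square algebra_simps)
  also have "gap A t * gap A t \<le> (M - m) * gap A t"
    using gap_le[of A t] gap_nonneg[of A t] by (intro mult_right_mono) auto
  finally show ?case
    using Suc gap_sum_mult_gap_le[of A t] by (simp add: gap_sum_Suc algebra_simps)
qed

lemma gap_sum_le: "gap_sum A T \<le> (M - m) + sqrt (ln K * (\<Sum>t<T. est_var A t))"
proof (rule square_le_affine_imp_le_add_sqrt)
  show "(gap_sum A T)\<^sup>2 \<le> ln K * (\<Sum>t<T. est_var A t) + (M - m) * gap_sum A T"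
    by (rule gap_sum_square_le)
  show "0 \<le> ln K * (\<Sum>t<T. est_var A t)"
    using ln_K_pos by (simp add: est_var_def sum_nonneg ah_p_nonneg)
  show "0 \<le> M - m"
    using m_le_M by simp
qed

end

section \<open>Expected regret\<close>

sublocale bandit \<subseteq> sequential_policy K "ah_p K M y"
proof
  show "0 \<le> ah_p K M y A t a" for A t a
    by (rule ah_p_nonneg)
  show "(\<Sum>a<K. ah_p K M y A t a) = 1" for A t
    using is_distr_ah_p by (simp add: is_distr_def)
  show "ah_p K M y A t = ah_p K M y B t" if "\<And>s. s < t \<Longrightarrow> A s = B s" for A B t
    using ah_state_causal[OF that] by (simp add: ah_p_def)
qed

context bandit
begin

lemma est_fun_upd: "est (A(t := b)) t a = (if a = b then (y t a - M) / ah_p K M y A t a + M else M)"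
  by (simp add: est_def P_fun_upd)

lemma est_causal: "(\<And>s. s \<le> t \<Longrightarrow> A s = B s) \<Longrightarrow> est A t a = est B t a"
  using P_causal[of t A B] by (simp add: est_def)

lemma est_var_causal: "(\<And>s. s \<le> t \<Longrightarrow> A s = B s) \<Longrightarrow> est_var A t = est_var B t"
  using P_causal[of t A B] est_causal[of t A B] by (simp add: est_var_def)

text \<open>The estimate is unbiased where \<open>p\<^sub>t a > 0\<close>; where \<open>p\<^sub>t a = 0\<close> it equals \<open>M \<ge> y t a\<close>
  (division by zero yields \<open>0\<close>).\<close>
lemma y_le_mean_est_fun_upd:
  assumes "a < K"
  shows "y t a \<le> (\<Sum>b<K. ah_p K M y A t b * est (A(t := b)) t a)"
proof -
  let ?p = "ah_p K M y A t"
  have "(\<Sum>b<K. ?p b * est (A(t := b)) t a)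
      = (\<Sum>b<K. ?p b * M + (if b = a then ?p a * ((y t a - M) / ?p a) else 0))"
    by (intro sum.cong) (auto simp: est_fun_upd algebra_simps)
  also have "\<dots> = M + ?p a * ((y t a - M) / ?p a)"
    using assms by (simp add: sum.distrib P_sum flip: sum_distrib_right)
  finally show ?thesis
    using y_bounds[OF assms, of t] by (cases "?p a = 0") auto
qed

lemma est_var_fun_upd:
  assumes "b < K"
  shows "est_var (A(t := b)) t = (y t b - M)\<^sup>2 / ah_p K M y A t b"
proof -
  let ?p = "ah_p K M y A t"
  have "est_var (A(t := b)) t = (\<Sum>a<K. if a = b then ?p b * ((y t b - M) / ?p b)\<^sup>2 else 0)"
    unfolding est_var_def by (intro sum.cong) (auto simp: est_fun_upd P_fun_upd)
  also have "\<dots> = (y t b - M)\<^sup>2 / ?p b"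
    using assms by (simp add: power_divide power2_eq_square)
  finally show ?thesis .
qed

lemma expected_gain_eq_expect_hedge_gain:
  "ah_expected_gain K M y T = expect T (\<lambda>A. \<Sum>t<T. hedge_gain A t)"
proof -
  have "ah_expected_gain K M y T = expect T (\<lambda>A. \<Sum>t<T. y t (A t))"
    by (simp add: ah_expected_gain_def expect_def history_prob_def)
  also have "\<dots> = expect T (\<lambda>A. \<Sum>t<T. hedge_gain A t)"
    by (intro expect_cong sum.cong) (auto simp: hedge_gain_eq P_pos_if_history_prob_pos)
  finally show ?thesis .
qed

lemma y_le_expect_est:
  assumes "t < T" "a < K"
  shows "y t a \<le> expect T (\<lambda>A. est A t a)"
proof -
  have "expect T (\<lambda>A. est A t a) = expect t (\<lambda>A. \<Sum>b<K. ah_p K M y A t b * est (A(t := b)) t a)"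
    by (rule expect_eq_expect_round[OF est_causal assms(1)])
  also have "y t a \<le> \<dots>"
    using expect_mono[of t "\<lambda>_. y t a"] y_le_mean_est_fun_upd[OF assms(2)]
    by (simp add: expect_const)
  finally show ?thesis .
qed

lemma expect_est_var_le:
  assumes "t < T"
  shows "expect T (\<lambda>A. est_var A t) \<le> K * (M - m)\<^sup>2"
proof -
  have "expect T (\<lambda>A. est_var A t) = expect t (\<lambda>A. \<Sum>b<K. ah_p K M y A t b * est_var (A(t := b)) t)"
    by (rule expect_eq_expect_round[OF est_var_causal assms])
  also have "\<dots> \<le> expect t (\<lambda>_. K * (M - m)\<^sup>2)"
  proof (rule expect_mono)
    fix A
    let ?p = "ah_p K M y A t"
    have "?p b * est_var (A(t := b)) t \<le> (M - m)\<^sup>2" if "b < K" for b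
    proof (cases "?p b = 0")
      case False
      then have "?p b * est_var (A(t := b)) t = (y t b - M)\<^sup>2"
        using that by (simp add: est_var_fun_upd)
      also have "\<dots> \<le> (M - m)\<^sup>2"
        using y_bounds[OF that, of t] by (intro power2_le_iff_abs_le[THEN iffD2]) auto
      finally show ?thesis .
    qed simp
    then show "(\<Sum>b<K. ?p b * est_var (A(t := b)) t) \<le> K * (M - m)\<^sup>2"
      using sum_mono[of "{..<K}" _ "\<lambda>_. (M - m)\<^sup>2"] by simp
  qed
  finally show ?thesis
    by (simp add: expect_const)
qed

lemma Max_sum_y_le_expect_Max_cum_est:
  "Max ((\<lambda>a. \<Sum>t<T. y t a) ` {..<K}) \<le> expect T (\<lambda>A. Max (cum_est A T ` {..<K}))"
proof -
  have "(\<Sum>t<T. y t a) \<le> expect T (\<lambda>A. Max (cum_est A T ` {..<K}))" if "a < K" for a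
  proof -
    have "(\<Sum>t<T. y t a) \<le> (\<Sum>t<T. expect T (\<lambda>A. est A t a))"
      using that by (intro sum_mono y_le_expect_est) auto
    also have "\<dots> = expect T (\<lambda>A. cum_est A T a)"
      by (simp add: expect_sum cum_est_eq_sum)
    also have "\<dots> \<le> expect T (\<lambda>A. Max (cum_est A T ` {..<K}))"
      using that by (intro expect_mono Max_ge) auto
    finally show ?thesis .
  qed
  then show ?thesis
    using arms_nonempty by simp
qed

lemma expect_sqrt_sum_est_var_le:
  "expect T (\<lambda>A. sqrt (ln K * (\<Sum>t<T. est_var A t))) \<le> (M - m) * sqrt (K * T * ln K)"
proof -
  have "expect T (\<lambda>A. sqrt (ln K * (\<Sum>t<T. est_var A t)))
      \<le> sqrt (expect T (\<lambda>A. ln K * (\<Sum>t<T. est_var A t)))"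
    using ln_K_pos by (intro expect_sqrt_le) (simp add: est_var_def sum_nonneg ah_p_nonneg)
  also have "expect T (\<lambda>A. ln K * (\<Sum>t<T. est_var A t)) \<le> ln K * (T * (K * (M - m)\<^sup>2))"
    using ln_K_pos expect_est_var_le
      sum_mono[of "{..<T}" "\<lambda>t. expect T (\<lambda>A. est_var A t)" "\<lambda>_. K * (M - m)\<^sup>2"]
    by (simp add: expect_cmult expect_sum)
  also have "sqrt (ln K * (T * (K * (M - m)\<^sup>2))) = (M - m) * sqrt (K * T * ln K)"
    using m_le_M by (simp add: real_sqrt_mult algebra_simps)
  finally show ?thesis
    by simp
qed

end

theorem theorem8:
  fixes K :: nat and M m :: real and y :: "nat \<Rightarrow> nat \<Rightarrow> real" and T :: nat
  assumes "K \<ge> 2" and "m \<le> M"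
    and "\<And>t a. a < K \<Longrightarrow> m \<le> y t a \<and> y t a \<le> M"
    and "T \<ge> 1"
  shows "ah_regret K M y T \<le> 2 * (M - m) * sqrt (real K * real T * ln (real K)) + 2 * (M - m)"
proof -
  interpret bandit K M m y
    using assms by unfold_locales auto
  let ?V = "\<lambda>A. ln K * (\<Sum>t<T. est_var A t)"
  have "ah_regret K M y T \<le> expect T (\<lambda>A. Max (cum_est A T ` {..<K}) - (\<Sum>t<T. hedge_gain A t))"
    using Max_sum_y_le_expect_Max_cum_est
    by (simp add: ah_regret_def expected_gain_eq_expect_hedge_gain expect_diff)
  also have "\<dots> \<le> expect T (\<lambda>A. 2 * (M - m) + 2 * sqrt (?V A))"
  proof (rule expect_mono)
    fix A
    show "Max (cum_est A T ` {..<K}) - (\<Sum>t<T. hedge_gain A t) \<le> 2 * (M - m) + 2 * sqrt (?V A)"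
      using Max_cum_est_minus_hedge_gain_le[of A T] gap_sum_le[of A T] by argo
  qed
  also have "\<dots> = 2 * (M - m) + 2 * expect T (\<lambda>A. sqrt (?V A))"
    by (simp add: expect_add expect_cmult expect_const)
  also have "\<dots> \<le> 2 * (M - m) + 2 * ((M - m) * sqrt (K * T * ln K))"
    using expect_sqrt_sum_est_var_le by simp
  finally show ?thesis
    by (simp add: algebra_simps)
qed

end
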